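(* Let $J$ be a countable set and $\mathcal{A}$ the non-unital algebra of finitely supported functions $J\to\mathbb{R}$ with pointwise operations. Let $\sigma:J\to J$ be a bijection and $\tilde{\sigma}(f)=f\circ\sigma^{-1}$. The center of the skew polynomial ring $\mathcal{A}[x,\tilde{\sigma},0]$ is $$Z(\mathcal{A}[x,\tilde{\sigma},0])=\Big\{\sum_{k=0}^m f_kx^k : f_k\in\mathcal{A},\ f_k=0\text{ on } Sep^k(J)\text{ and }\tilde{\sigma}(f_k)=f_k\text{ for all }k\Big\}.$$
   Context: $\mathcal{A}[x,\tilde{\sigma},0]$ is the set of formal sums $\sum_{k=0}^m f_kx^k$ with $f_k\in\mathcal{A}$, with coefficientwise addition and multiplication the bilinear extension of $(fx^k)(gx^l)=f\,\tilde{\sigma}^k(g)\,x^{k+l}$. For an integer $k$, $Sep^k(J)=\{p\in J:\sigma^k(p)\neq p\}$ (so $Sep^0(J)=\emptyset$). *)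

theory Defs
  imports Complex_Main "HOL-Library.Countable"
begin

definition fin_supp :: "('j \<Rightarrow> real) \<Rightarrow> bool" where
  "fin_supp f \<longleftrightarrow> finite {j. f j \<noteq> 0}"

definition sigma_tilde :: "('j \<Rightarrow> 'j) \<Rightarrow> ('j \<Rightarrow> real) \<Rightarrow> ('j \<Rightarrow> real)" where
  "sigma_tilde \<sigma> f = f \<circ> inv \<sigma>"

text \<open>Elements of A[x,sigma~,0]: coefficient sequences k \<mapsto> f_k, finitely many nonzero,
  each in A.\<close>
definition skew_carrier :: "(nat \<Rightarrow> 'j \<Rightarrow> real) set" where
  "skew_carrier = {p. finite {k. p k \<noteq> (\<lambda>_. 0)} \<and> (\<forall>k. fin_supp (p k))}"

text \<open>Multiplication: bilinear extension of (f x^k)(g x^l) = f sigma~^k(g) x^(k+l).\<close>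
definition skew_mult :: "('j \<Rightarrow> 'j) \<Rightarrow> (nat \<Rightarrow> 'j \<Rightarrow> real) \<Rightarrow> (nat \<Rightarrow> 'j \<Rightarrow> real)
    \<Rightarrow> (nat \<Rightarrow> 'j \<Rightarrow> real)" where
  "skew_mult \<sigma> p q = (\<lambda>n j. \<Sum>k\<le>n. p k j * ((sigma_tilde \<sigma> ^^ k) (q (n - k))) j)"

definition skew_center :: "('j \<Rightarrow> 'j) \<Rightarrow> (nat \<Rightarrow> 'j \<Rightarrow> real) set" where
  "skew_center \<sigma> = {p \<in> skew_carrier. \<forall>q \<in> skew_carrier. skew_mult \<sigma> p q = skew_mult \<sigma> q p}"

definition Sep :: "('j \<Rightarrow> 'j) \<Rightarrow> nat \<Rightarrow> 'j set" where
  "Sep \<sigma> k = {p. (\<sigma> ^^ k) p \<noteq> p}"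

end

theory Submission
  imports Defs "HOL-Library.Indicator_Function"
begin

text \<open>Commuting with the monomials \<open>\<delta>\<^sub>j x\<^sup>0\<close> and \<open>\<delta>\<^sub>j x\<^sup>1\<close>
  (\<open>\<delta>\<^sub>j\<close> the indicator of \<open>j\<close>) forces a central element to vanish
  where \<open>\<sigma>\<^sup>k\<close> moves \<open>j\<close> and to be \<open>\<sigma>\<close>-invariant. Conversely,
  under these two conditions the twist \<open>\<sigma>\<^sup>k\<close> drops out of both products
  \<open>p q\<close> and \<open>q p\<close>, which then become the ordinary (commutative) convolution
  of coefficient sequences.\<close>

lemma funpow_sigma_tilde: "(sigma_tilde \<sigma> ^^ k) f = f \<circ> (inv \<sigma> ^^ k)"
  by (induction k) (auto simp: sigma_tilde_def funpow_swap1)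

lemma funpow_sigma_tilde_fixed:
  assumes "sigma_tilde \<sigma> f = f"
  shows "f \<circ> (inv \<sigma> ^^ k) = f"
proof -
  have "(sigma_tilde \<sigma> ^^ k) f = f"
    by (induction k) (simp_all add: assms)
  then show ?thesis
    by (simp add: funpow_sigma_tilde)
qed

lemma notin_Sep_iff_funpow_inv_fixed:
  assumes "bij \<sigma>"
  shows "j \<notin> Sep \<sigma> k \<longleftrightarrow> (inv \<sigma> ^^ k) j = j"
  using fun_cong[OF inv_fn_o_fn_is_id[OF assms], of k j]
    fun_cong[OF fn_o_inv_fn_is_id[OF assms], of k j]
  by (auto simp: Sep_def)

definition skew_monom :: "nat \<Rightarrow> ('j \<Rightarrow> real) \<Rightarrow> nat \<Rightarrow> 'j \<Rightarrow> real" where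
  "skew_monom l g = (\<lambda>m. if m = l then g else (\<lambda>_. 0))"

lemma skew_monom_in_carrier:
  assumes "fin_supp g"
  shows "skew_monom l g \<in> skew_carrier"
proof -
  have "{k. skew_monom l g k \<noteq> (\<lambda>_. 0)} \<subseteq> {l}"
    by (auto simp: skew_monom_def)
  then have "finite {k. skew_monom l g k \<noteq> (\<lambda>_. 0)}"
    using finite_subset by blast
  moreover have "fin_supp (skew_monom l g k)" for k
    using assms by (auto simp: skew_monom_def fin_supp_def)
  ultimately show ?thesis
    by (simp add: skew_carrier_def)
qed

lemma skew_mult_monom_right:
  "skew_mult \<sigma> p (skew_monom l g) n j =
    (if l \<le> n then p (n - l) j * g ((inv \<sigma> ^^ (n - l)) j) else 0)"
proof -
  have "skew_mult \<sigma> p (skew_monom l g) n j =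
      (\<Sum>k\<le>n. if k = n - l \<and> l \<le> n then p (n - l) j * g ((inv \<sigma> ^^ (n - l)) j) else 0)"
    unfolding skew_mult_def funpow_sigma_tilde
    by (intro sum.cong refl) (auto simp: skew_monom_def)
  also have "\<dots> = (if l \<le> n then p (n - l) j * g ((inv \<sigma> ^^ (n - l)) j) else 0)"
    by (cases "l \<le> n") (simp_all add: sum.delta)
  finally show ?thesis .
qed

lemma skew_mult_monom_left:
  "skew_mult \<sigma> (skew_monom l g) p n j =
    (if l \<le> n then g j * p (n - l) ((inv \<sigma> ^^ l) j) else 0)"
proof -
  have "skew_mult \<sigma> (skew_monom l g) p n j =
      (\<Sum>k\<le>n. if k = l \<and> l \<le> n then g j * p (n - l) ((inv \<sigma> ^^ l) j) else 0)"
    unfolding skew_mult_def funpow_sigma_tilde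
    by (intro sum.cong refl) (auto simp: skew_monom_def)
  also have "\<dots> = (if l \<le> n then g j * p (n - l) ((inv \<sigma> ^^ l) j) else 0)"
    by (cases "l \<le> n") (simp_all add: sum.delta)
  finally show ?thesis .
qed

lemma fin_supp_indicator_singleton: "fin_supp (indicat_real {j})"
  by (simp add: fin_supp_def indicator_def)

lemma skew_center_commutes_monom:
  assumes "p \<in> skew_center \<sigma>"
  shows "skew_mult \<sigma> p (skew_monom l (indicat_real {j})) =
    skew_mult \<sigma> (skew_monom l (indicat_real {j})) p"
  using assms skew_monom_in_carrier[OF fin_supp_indicator_singleton, of l j]
  by (simp add: skew_center_def)

lemma skew_center_coeff_vanishes_on_Sep:
  assumes "bij \<sigma>" and "p \<in> skew_center \<sigma>" and "j \<in> Sep \<sigma> k"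
  shows "p k j = 0"
proof -
  have "p k j * indicat_real {j} ((inv \<sigma> ^^ k) j) = p k j"
    using fun_cong[OF fun_cong[OF skew_center_commutes_monom[OF assms(2), of 0 j]], of k j]
    by (simp add: skew_mult_monom_right skew_mult_monom_left)
  moreover have "(inv \<sigma> ^^ k) j \<noteq> j"
    using assms(3) notin_Sep_iff_funpow_inv_fixed[OF assms(1)] by blast
  ultimately show ?thesis
    by simp
qed

lemma skew_center_coeff_invariant:
  assumes "bij \<sigma>" and "p \<in> skew_center \<sigma>"
  shows "sigma_tilde \<sigma> (p k) = p k"
proof
  fix j
  have twisted: "p k j * indicat_real {j} ((inv \<sigma> ^^ k) j) = p k (inv \<sigma> j)"
    using fun_cong[OF fun_cong[OF skew_center_commutes_monom[OF assms(2), of 1 j]], of "Suc k" j]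
    by (simp add: skew_mult_monom_right skew_mult_monom_left)
  show "sigma_tilde \<sigma> (p k) j = p k j"
  proof (cases "j \<in> Sep \<sigma> k")
    case True
    then show ?thesis
      using twisted skew_center_coeff_vanishes_on_Sep[OF assms]
        notin_Sep_iff_funpow_inv_fixed[OF assms(1)]
      by (simp add: sigma_tilde_def)
  next
    case False
    then show ?thesis
      using twisted notin_Sep_iff_funpow_inv_fixed[OF assms(1)]
      by (simp add: sigma_tilde_def)
  qed
qed

lemma skew_mult_left_untwisted:
  assumes "bij \<sigma>" and "\<And>k j. j \<in> Sep \<sigma> k \<Longrightarrow> p k j = 0"
  shows "skew_mult \<sigma> p q n j = (\<Sum>k\<le>n. p k j * q (n - k) j)"
  unfolding skew_mult_def funpow_sigma_tilde
proof (intro sum.cong refl)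
  fix k
  show "p k j * (q (n - k) \<circ> (inv \<sigma> ^^ k)) j = p k j * q (n - k) j"
    using assms(2)[of j k] notin_Sep_iff_funpow_inv_fixed[OF assms(1), of j k]
    by (cases "j \<in> Sep \<sigma> k") simp_all
qed

lemma skew_mult_right_untwisted:
  assumes "\<And>k. sigma_tilde \<sigma> (p k) = p k"
  shows "skew_mult \<sigma> q p n j = (\<Sum>k\<le>n. q k j * p (n - k) j)"
  unfolding skew_mult_def funpow_sigma_tilde funpow_sigma_tilde_fixed[OF assms] ..

lemma convolution_commute:
  fixes p q :: "nat \<Rightarrow> 'j \<Rightarrow> real"
  shows "(\<Sum>k\<le>n. p k j * q (n - k) j) = (\<Sum>k\<le>n. q k j * p (n - k) j)"
  by (rule sum.reindex_bij_witness[where i="\<lambda>k. n - k" and j="\<lambda>k. n - k"]) auto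

lemma in_skew_centerI:
  assumes "bij \<sigma>" and "p \<in> skew_carrier"
    and "\<And>k j. j \<in> Sep \<sigma> k \<Longrightarrow> p k j = 0" and "\<And>k. sigma_tilde \<sigma> (p k) = p k"
  shows "p \<in> skew_center \<sigma>"
proof -
  have "skew_mult \<sigma> p q n j = skew_mult \<sigma> q p n j" for q n j
  proof -
    have "skew_mult \<sigma> p q n j = (\<Sum>k\<le>n. p k j * q (n - k) j)"
      by (rule skew_mult_left_untwisted[OF assms(1,3)])
    also have "\<dots> = (\<Sum>k\<le>n. q k j * p (n - k) j)"
      by (rule convolution_commute)
    also have "\<dots> = skew_mult \<sigma> q p n j"
      by (rule skew_mult_right_untwisted[OF assms(4), symmetric])
    finally show ?thesis .
  qed
  then show ?thesis
    using assms(2) by (simp add: skew_center_def fun_eq_iff)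
qed

theorem theorem9:
  fixes \<sigma> :: "'j::countable \<Rightarrow> 'j"
  assumes "bij \<sigma>"
  shows "skew_center \<sigma> =
    {p \<in> skew_carrier. \<forall>k. (\<forall>j \<in> Sep \<sigma> k. p k j = 0) \<and> sigma_tilde \<sigma> (p k) = p k}"
proof (intro set_eqI iffI)
  fix p
  assume "p \<in> skew_center \<sigma>"
  then show "p \<in> {p \<in> skew_carrier. \<forall>k. (\<forall>j \<in> Sep \<sigma> k. p k j = 0) \<and> sigma_tilde \<sigma> (p k) = p k}"
    using skew_center_coeff_vanishes_on_Sep[OF assms] skew_center_coeff_invariant[OF assms]
    by (auto simp: skew_center_def)
next
  fix p
  assume "p \<in> {p \<in> skew_carrier. \<forall>k. (\<forall>j \<in> Sep \<sigma> k. p k j = 0) \<and> sigma_tilde \<sigma> (p k) = p k}"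
  then show "p \<in> skew_center \<sigma>"
    by (intro in_skew_centerI[OF assms]) auto
qed

end
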